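(* Let $1\le M\le N$ and let $\mathbf{B}=[\mathbf{b}_1,\dots,\mathbf{b}_M]$ be a complex $N\times M$ matrix with linearly independent columns and orthogonality defect $$\delta=\frac{\|\mathbf{b}_1\|^2\|\mathbf{b}_2\|^2\cdots\|\mathbf{b}_M\|^2}{\det(\mathbf{B}^{\mathtt{H}}\mathbf{B})}.$$ Let $\mathbf{B}^{-\mathtt{H}}=[\mathbf{a}_1,\dots,\mathbf{a}_M]$ denote the Hermitian of the inverse of $\mathbf{B}$ (of its pseudo-inverse if $M<N$), i.e. $\mathbf{B}^{-\mathtt{H}}=\mathbf{B}(\mathbf{B}^{\mathtt{H}}\mathbf{B})^{-1}$. Then $$\max\{\|\mathbf{b}_1\|,\dots,\|\mathbf{b}_M\|\}\le\frac{\sqrt{\delta}}{\min\{\|\mathbf{a}_1\|,\dots,\|\mathbf{a}_M\|\}}$$ and $$\max\{\|\mathbf{a}_1\|,\dots,\|\mathbf{a}_M\|\}\le\frac{\sqrt{\delta}}{\min\{\|\mathbf{b}_1\|,\dots,\|\mathbf{b}_M\|\}}.$$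
   Context: $(\cdot)^{\mathtt{H}}$ denotes the conjugate transpose, and $\|\cdot\|$ the Euclidean norm on $\mathbb{C}^N$. *)

theory Defs
  imports "HOL-Analysis.Analysis"
begin

definition hermitian_transpose :: "complex ^'m ^'n \<Rightarrow> complex ^'n ^'m" where
  "hermitian_transpose B = (\<chi> i j. cnj (B $ j $ i))"

end

(*
  Let a_i, b_i be the columns of A and B, and let c_i be the component of b_i orthogonal to
  the other columns of B. Since B^H A = I, the vector a_i lies in the column space of B, is
  orthogonal to every b_k with k <> i, and has <b_i, a_i> = 1; hence |a_i| |c_i| = 1.
  Replacing b_i by c_i is a unimodular column operation, so it leaves det (B^H B) unchanged,
  and Hadamard's inequality (proved by repeating this Gram-Schmidt step) then gives
  det (B^H B) <= |c_i|^2 * prod_{j <> i} |b_j|^2. Hence |a_i| |b_i| <= sqrt delta for every i,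
  and both claims follow by evaluating at an index of the maximum.
*)

theory Submission
  imports Defs
begin

definition cinner :: "complex^'n \<Rightarrow> complex^'n \<Rightarrow> complex" where
  "cinner u v = (\<Sum>k\<in>UNIV. cnj (u $ k) * v $ k)"

definition gram :: "complex^'m^'n \<Rightarrow> complex^'m^'m" where
  "gram B = hermitian_transpose B ** B"

lemma cnj_cinner: "cnj (cinner u v) = cinner v u"
  by (simp add: cinner_def mult.commute)

lemma cinner_self: "cinner u u = complex_of_real ((norm u)\<^sup>2)"
proof -
  have "(norm u)\<^sup>2 = (\<Sum>k\<in>UNIV. (norm (u $ k))\<^sup>2)"
    by (simp add: norm_vec_def L2_set_def sum_nonneg)
  moreover have "cnj (u $ k) * u $ k = complex_of_real ((norm (u $ k))\<^sup>2)" for k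
    by (metis complex_norm_square mult.commute)
  ultimately show ?thesis
    by (simp add: cinner_def)
qed

lemma cinner_diff_left: "cinner (u - v) w = cinner u w - cinner v w"
  by (simp add: cinner_def algebra_simps sum_subtractf)

lemma cinner_scale_right: "cinner u (c *s v) = c * cinner u v"
  by (simp add: cinner_def sum_distrib_left mult.left_commute)

lemma cinner_matrix_vector_right:
  "cinner u (B *v x) = (\<Sum>k\<in>UNIV. x $ k * cinner u (column k B))"
proof -
  have "cinner u (B *v x) = (\<Sum>j\<in>UNIV. \<Sum>k\<in>UNIV. cnj (u $ j) * (B $ j $ k * x $ k))"
    by (simp add: cinner_def matrix_vector_mult_def sum_distrib_left)
  also have "\<dots> = (\<Sum>k\<in>UNIV. \<Sum>j\<in>UNIV. cnj (u $ j) * (B $ j $ k * x $ k))"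
    by (rule sum.swap)
  also have "\<dots> = (\<Sum>k\<in>UNIV. x $ k * cinner u (column k B))"
    by (simp add: cinner_def column_def sum_distrib_left mult.commute mult.left_commute)
  finally show ?thesis .
qed

lemma cinner_matrix_vector_left:
  "cinner (B *v x) u = (\<Sum>k\<in>UNIV. cnj (x $ k) * cinner (column k B) u)"
proof -
  have "cinner (B *v x) u = cnj (cinner u (B *v x))"
    by (simp only: cnj_cinner)
  then show ?thesis
    by (simp add: cinner_matrix_vector_right cnj_cinner)
qed

lemma orthogonal_iff_Re_cinner: "orthogonal u v \<longleftrightarrow> Re (cinner u v) = 0"
  by (simp add: orthogonal_def inner_vec_def cinner_def inner_complex_def Re_sum)

lemma cinner_eq_0_commute: "cinner u v = 0 \<longleftrightarrow> cinner v u = 0"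
  by (metis cnj_cinner complex_cnj_zero)

lemma cinner_eq_0_iff: "cinner u v = 0 \<longleftrightarrow> orthogonal u v \<and> orthogonal u (\<i> *s v)"
  by (simp add: orthogonal_iff_Re_cinner cinner_scale_right complex_eq_iff)

lemma matrix_vector_mult_axis: "B *v axis k c = c *s column k (B :: 'a::comm_semiring_1^'m^'n)"
  by (simp add: matrix_vector_mult_def column_def axis_def vec_eq_iff if_distrib mult.commute
      cong: if_cong)

lemma column_matrix_mul: "column i (A ** M) = A *v column i M"
  by (simp add: vec_eq_iff column_def matrix_matrix_mult_def matrix_vector_mult_def)

lemma gram_entry: "gram B $ j $ k = cinner (column j B) (column k B)"
  by (simp add: gram_def hermitian_transpose_def matrix_matrix_mult_def cinner_def column_def)

lemma gram_matrix_vector: "(gram B *v y) $ k = cinner (column k B) (B *v y)"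
  by (simp only: cinner_matrix_vector_right) (simp add: matrix_vector_mult_def gram_entry mult.commute)

lemma hermitian_transpose_matrix_mul:
  "hermitian_transpose (A ** B) = hermitian_transpose B ** hermitian_transpose A"
  by (simp add: hermitian_transpose_def matrix_matrix_mult_def vec_eq_iff mult.commute)

lemma det_hermitian_transpose: "det (hermitian_transpose A) = cnj (det (A :: complex^'n^'n))"
proof -
  have "hermitian_transpose A = transpose (\<chi> i j. cnj (A $ i $ j))"
    by (simp add: hermitian_transpose_def transpose_def)
  then have "det (hermitian_transpose A) = det (\<chi> i j. cnj (A $ i $ j))"
    by (simp only: det_transpose)
  then show ?thesis
    by (simp add: det_def)
qed

lemma det_gram_matrix_mul:
  "det (gram (B ** E)) = cnj (det E) * det (gram B) * det E"
proof -
  have "gram (B ** E) = hermitian_transpose E ** gram B ** E"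
    by (simp add: gram_def hermitian_transpose_matrix_mul matrix_mul_assoc)
  then show ?thesis
    by (simp add: det_mul det_hermitian_transpose)
qed

lemma invertible_gram:
  assumes "\<forall>c. B *v c = 0 \<longrightarrow> c = 0"
  shows "invertible (gram B)"
proof -
  have "y = 0" if "gram B *v y = 0" for y
  proof -
    have "cinner (B *v y) (B *v y) = 0"
      using that by (simp add: cinner_matrix_vector_left flip: gram_matrix_vector)
    then show "y = 0"
      using assms by (simp add: cinner_self)
  qed
  then show ?thesis
    by (meson invertible_left_inverse matrix_left_invertible_ker)
qed

definition column_shear :: "'m \<Rightarrow> 'a::field^'m \<Rightarrow> 'a^'m^'m" where
  "column_shear i x = mat 1 - (\<chi> r s. if s = i then x $ r else 0)"

lemma column_matrix_mul_column_shear: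
  "column k (B ** column_shear i x) = (if k = i then column i B - B *v x else column k B)"
proof -
  have "(B ** column_shear i x) $ r $ k = B $ r $ k - (if k = i then (B *v x) $ r else 0)" for r
    by (simp add: column_shear_def matrix_matrix_mult_def matrix_vector_mult_def mat_def
        right_diff_distrib sum_subtractf if_distrib[of "(*) _"] cong: if_cong)
  then show ?thesis
    by (simp add: column_def vec_eq_iff)
qed

lemma det_column_shear:
  assumes "x $ i = 0"
  shows "det (column_shear i x) = 1"
proof -
  let ?I = "mat 1 :: 'a^'m^'m"
  have "- x = (\<Sum>j\<in>UNIV-{i}. (- x $ j) *s row j ?I)"
    using assms by (auto simp: vec_eq_iff row_def mat_def if_distrib sum.delta cong: if_cong)
  also have "\<dots> \<in> vec.span {row j ?I |j. j \<noteq> i}"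
    by (intro vec.span_sum vec.span_scale vec.span_base) auto
  finally have span: "- x \<in> vec.span {row j ?I |j. j \<noteq> i}" .
  have "transpose (column_shear i x) = (\<chi> k. if k = i then row i ?I + - x else row k ?I)"
    using assms by (auto simp: vec_eq_iff column_shear_def transpose_def row_def mat_def)
  then have "det (column_shear i x) = det (\<chi> k. if k = i then row i ?I + - x else row k ?I)"
    by (metis det_transpose)
  also have "\<dots> = 1"
    using det_row_span[OF span] by simp
  finally show ?thesis .
qed

text \<open>The vector \<^term>\<open>column i B - B *v x\<close> is the component of the \<open>i\<close>-th column
  orthogonal to all other columns; \<^term>\<open>x $ i = 0\<close> says that \<^term>\<open>B *v x\<close> lies in
  their span.\<close>

definition residual_coeffs :: "complex^'m^'n \<Rightarrow> 'm \<Rightarrow> complex^'m \<Rightarrow> bool" where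
  "residual_coeffs B i x \<longleftrightarrow>
    x $ i = 0 \<and> (\<forall>k. k \<noteq> i \<longrightarrow> cinner (column k B) (column i B - B *v x) = 0)"

lemma residual_coeffs_exist:
  fixes B :: "complex^'m^'n"
  obtains x where "residual_coeffs B i x"
proof -
  define W where "W = (\<lambda>x. B *v x) ` {x. x $ i = 0}"
  have "subspace W"
    unfolding W_def by (rule linear_subspace_image) (auto simp: subspace_def)
  then have span_W: "span W = W"
    by simp
  obtain y z where "y \<in> span W" and z: "\<And>w. w \<in> span W \<Longrightarrow> orthogonal z w"
    and yz: "column i B = y + z"
    using orthogonal_subspace_decomp_exists by blast
  then have "y \<in> W"
    by (simp only: span_W)
  with yz obtain x where x: "x $ i = 0" "z = column i B - B *v x"
    by (auto simp: W_def)
  have "cinner (column k B) z = 0" if "k \<noteq> i" for k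
  proof -
    \<comment> \<open>\<open>W\<close> is closed under complex scaling, and real orthogonality to \<open>v\<close> and \<open>\<i> v\<close>
      is complex orthogonality to \<open>v\<close>.\<close>
    have "c *s column k B \<in> W" for c
    proof -
      have "axis k c $ i = 0"
        using that by (simp add: axis_def)
      then show ?thesis
        unfolding W_def matrix_vector_mult_axis[symmetric] by blast
    qed
    then have "column k B \<in> W" "\<i> *s column k B \<in> W"
      by (metis vector_smult_lid)+
    then have "cinner z (column k B) = 0"
      using z by (simp add: span_W cinner_eq_0_iff)
    then show ?thesis
      by (simp add: cinner_eq_0_commute)
  qed
  with x have "residual_coeffs B i x"
    by (simp add: residual_coeffs_def)
  then show ?thesis
    by (rule that)
qed

lemma cinner_matrix_vector_residual:
  assumes "residual_coeffs B i x" and "y $ i = 0"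
  shows "cinner (B *v y) (column i B - B *v x) = 0"
proof -
  have "cnj (y $ k) * cinner (column k B) (column i B - B *v x) = 0" for k
    using assms by (cases "k = i") (simp_all add: residual_coeffs_def)
  then show ?thesis
    unfolding cinner_matrix_vector_left by (intro sum.neutral) blast
qed

lemma cinner_column_residual:
  assumes "residual_coeffs B i x"
  shows "cinner (column k B) (column i B - B *v x) =
    (if k = i then of_real ((norm (column i B - B *v x))\<^sup>2) else 0)"
proof (cases "k = i")
  case True
  have "x $ i = 0"
    using assms by (simp add: residual_coeffs_def)
  then have "cinner (column i B - B *v x) (column i B - B *v x) =
      cinner (column i B) (column i B - B *v x)"
    using cinner_matrix_vector_residual[OF assms] by (simp add: cinner_diff_left)
  with True show ?thesis
    by (simp add: cinner_self)
qed (use assms in \<open>simp add: residual_coeffs_def\<close>)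

lemma norm_residual_le:
  assumes "residual_coeffs B i x"
  shows "norm (column i B - B *v x) \<le> norm (column i B)"
proof -
  have "x $ i = 0"
    using assms by (simp add: residual_coeffs_def)
  then have "cinner (column i B - B *v x) (B *v x) = 0"
    using cinner_matrix_vector_residual[OF assms] cinner_eq_0_commute by blast
  then have "orthogonal (column i B - B *v x) (B *v x)"
    by (simp add: orthogonal_iff_Re_cinner)
  then have "(norm (column i B))\<^sup>2 = (norm (column i B - B *v x))\<^sup>2 + (norm (B *v x))\<^sup>2"
    using norm_add_Pythagorean by fastforce
  then show ?thesis
    by (simp add: power2_le_imp_le)
qed

lemma det_gram_orthogonal_columns:
  assumes "\<And>j k. j \<noteq> k \<Longrightarrow> cinner (column j B) (column k B) = 0"
  shows "det (gram B) = of_real (\<Prod>j\<in>UNIV. (norm (column j B))\<^sup>2)"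
proof -
  have "det (gram B) = (\<Prod>j\<in>UNIV. gram B $ j $ j)"
    by (rule det_diagonal) (simp add: gram_entry assms)
  then show ?thesis
    by (simp add: gram_entry cinner_self)
qed

lemma det_gram_residual_column:
  assumes "residual_coeffs B i x"
  shows "det (gram (B ** column_shear i x)) = det (gram B)"
  using assms by (simp add: det_gram_matrix_mul det_column_shear residual_coeffs_def)

lemma cinner_columns_column_shear:
  assumes res: "residual_coeffs B i x"
    and orth: "\<And>j k. k \<notin> insert i S \<Longrightarrow> j \<noteq> k \<Longrightarrow> cinner (column j B) (column k B) = 0"
    and jk: "k \<notin> S" "j \<noteq> k"
  shows "cinner (column j (B ** column_shear i x)) (column k (B ** column_shear i x)) = 0"
proof -
  consider "k = i" | "j = i" | "j \<noteq> i" "k \<notin> insert i S"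
    using jk by blast
  then show ?thesis
  proof cases
    case 1
    then show ?thesis
      using jk res by (simp add: column_matrix_mul_column_shear residual_coeffs_def)
  next
    case 2
    then show ?thesis
      using jk res by (simp add: column_matrix_mul_column_shear residual_coeffs_def cinner_eq_0_commute)
  next
    case 3
    then show ?thesis
      using jk orth by (simp add: column_matrix_mul_column_shear)
  qed
qed

text \<open>Gram--Schmidt, one column at a time: the columns outside \<open>S\<close> are already orthogonal to
  all others, and replacing a column by its residual keeps the Gram determinant and does not
  increase the column norms.\<close>

lemma hadamard_inequality_partial:
  fixes B :: "complex^'m^'n"
  assumes "\<And>j k. k \<notin> S \<Longrightarrow> j \<noteq> k \<Longrightarrow> cinner (column j B) (column k B) = 0"
  shows "Im (det (gram B)) = 0 \<and> 0 \<le> Re (det (gram B)) \<and>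
    Re (det (gram B)) \<le> (\<Prod>j\<in>UNIV. (norm (column j B))\<^sup>2)"
  using finite[of S] assms
proof (induction S arbitrary: B rule: finite_induct)
  case empty
  then have "det (gram B) = of_real (\<Prod>j\<in>UNIV. (norm (column j B))\<^sup>2)"
    by (intro det_gram_orthogonal_columns) simp
  then show ?case
    by (simp only: Re_complex_of_real Im_complex_of_real) (simp add: prod_nonneg)
next
  case (insert i S)
  obtain x where res: "residual_coeffs B i x"
    using residual_coeffs_exist by blast
  define B' where "B' = B ** column_shear i x"
  have col: "column k B' = (if k = i then column i B - B *v x else column k B)" for k
    by (simp add: B'_def column_matrix_mul_column_shear)
  have "cinner (column j B') (column k B') = 0" if "k \<notin> S" "j \<noteq> k" for j k
    unfolding B'_def using res insert.prems that by (rule cinner_columns_column_shear)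
  then have IH: "Im (det (gram B')) = 0 \<and> 0 \<le> Re (det (gram B')) \<and>
      Re (det (gram B')) \<le> (\<Prod>j\<in>UNIV. (norm (column j B'))\<^sup>2)"
    by (rule insert.IH)
  have "(\<Prod>j\<in>UNIV. (norm (column j B'))\<^sup>2) \<le> (\<Prod>j\<in>UNIV. (norm (column j B))\<^sup>2)"
    by (rule prod_mono) (simp add: col norm_residual_le[OF res] power_mono)
  with IH show ?case
    unfolding B'_def det_gram_residual_column[OF res] by linarith
qed

lemma det_gram_real_nonneg: "Im (det (gram B)) = 0" "0 \<le> Re (det (gram B))"
  using hadamard_inequality_partial[of UNIV B] by auto

lemma hadamard_inequality: "Re (det (gram B)) \<le> (\<Prod>j\<in>UNIV. (norm (column j B))\<^sup>2)"
  using hadamard_inequality_partial[of UNIV B] by auto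

lemma det_gram_pos:
  assumes "\<forall>c. B *v c = 0 \<longrightarrow> c = 0"
  shows "0 < Re (det (gram B))"
proof -
  have "det (gram B) \<noteq> 0"
    using invertible_gram[OF assms] by (simp add: invertible_det_nz)
  then show ?thesis
    using det_gram_real_nonneg[of B] by (simp add: complex_eq_iff)
qed

lemma det_gram_le_residual:
  assumes "residual_coeffs B i x"
  shows "Re (det (gram B)) \<le>
    (norm (column i B - B *v x))\<^sup>2 * (\<Prod>j\<in>UNIV-{i}. (norm (column j B))\<^sup>2)"
proof -
  have col: "column k (B ** column_shear i x) = (if k = i then column i B - B *v x else column k B)"
    for k by (rule column_matrix_mul_column_shear)
  have "Re (det (gram B)) = Re (det (gram (B ** column_shear i x)))"
    by (simp add: det_gram_residual_column[OF assms])
  also have "\<dots> \<le> (\<Prod>j\<in>UNIV. (norm (column j (B ** column_shear i x)))\<^sup>2)"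
    by (rule hadamard_inequality)
  also have "\<dots> = (norm (column i B - B *v x))\<^sup>2 * (\<Prod>j\<in>UNIV-{i}. (norm (column j B))\<^sup>2)"
    by (simp add: prod.remove[of UNIV i] col)
  finally show ?thesis .
qed

lemma matrix_mul_matrix_inv:
  assumes "invertible A"
  shows "A ** matrix_inv A = mat 1"
  using assms unfolding invertible_def matrix_inv_def
  by (rule someI_ex[where P = "\<lambda>A'. A ** A' = mat 1 \<and> A' ** A = mat 1", THEN conjunct1])

lemma cinner_column_dual_basis:
  assumes "invertible (gram B)"
  shows "cinner (column k B) (column i (B ** matrix_inv (gram B))) = (if k = i then 1 else 0)"
proof -
  let ?M = "matrix_inv (gram B)"
  have "cinner (column k B) (column i (B ** ?M)) = (gram B *v column i ?M) $ k"
    by (simp only: column_matrix_mul gram_matrix_vector)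
  also have "\<dots> = (gram B ** ?M) $ k $ i"
    by (simp add: column_def matrix_matrix_mult_def matrix_vector_mult_def)
  finally show ?thesis
    by (simp add: matrix_mul_matrix_inv[OF assms] mat_def)
qed

lemma dual_column_nonzero:
  assumes "invertible (gram B)"
  shows "column i (B ** matrix_inv (gram B)) \<noteq> 0"
  using cinner_column_dual_basis[OF assms, of i i] by (auto simp: cinner_def)

lemma norm_dual_mult_norm_residual:
  assumes res: "residual_coeffs B i x"
    and dual: "\<And>k. cinner (column k B) a = (if k = i then 1 else 0)"
    and a: "a = B *v w"
  shows "norm a * norm (column i B - B *v x) = 1"
proof -
  let ?c = "column i B - B *v x"
  have sum_delta: "(\<Sum>k\<in>UNIV. cnj (w $ k) * (if k = i then z else 0)) = cnj (w $ i) * z" for z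
    by (simp add: if_distrib[of "(*) _"] cong: if_cong)
  have expand: "cinner a u = (\<Sum>k\<in>UNIV. cnj (w $ k) * cinner (column k B) u)" for u
    unfolding a by (rule cinner_matrix_vector_left)
  have "cinner a a = cnj (w $ i)"
    using sum_delta[of 1] by (simp only: expand dual mult_1_right)
  moreover have "cinner a ?c = cnj (w $ i) * of_real ((norm ?c)\<^sup>2)"
    unfolding expand cinner_column_residual[OF res] by (rule sum_delta)
  moreover have "cinner (B *v x) a = 0"
    using res by (simp add: cinner_matrix_vector_left dual residual_coeffs_def if_distrib[of "(*) _"]
        cong: if_cong)
  then have "cinner ?c a = 1"
    by (simp add: cinner_diff_left dual)
  ultimately have "of_real ((norm a)\<^sup>2 * (norm ?c)\<^sup>2) = (1 :: complex)"
    by (metis cinner_self cnj_cinner complex_cnj_one of_real_mult)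
  then have "(norm a * norm ?c)\<^sup>2 = 1"
    unfolding of_real_eq_1_iff by (simp add: power_mult_distrib)
  moreover have "0 \<le> norm a * norm ?c"
    by simp
  ultimately show ?thesis
    by (auto simp: power2_eq_1_iff)
qed

lemma norm_dual_column_mult_norm_column_le:
  fixes B :: "complex^'m^'n"
  assumes indep: "\<forall>c. B *v c = 0 \<longrightarrow> c = 0"
  shows "norm (column i (B ** matrix_inv (gram B))) * norm (column i B)
    \<le> sqrt ((\<Prod>j\<in>UNIV. (norm (column j B))\<^sup>2) / Re (det (gram B)))"
proof -
  let ?a = "column i (B ** matrix_inv (gram B))"
  obtain x where res: "residual_coeffs B i x"
    using residual_coeffs_exist by blast
  let ?c = "column i B - B *v x"
  define Q where "Q = (\<Prod>j\<in>UNIV-{i}. (norm (column j B))\<^sup>2)"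
  have "norm ?a * norm ?c = 1"
    using norm_dual_mult_norm_residual[OF res cinner_column_dual_basis[OF invertible_gram[OF indep]]]
    by (simp add: column_matrix_mul)
  have "(norm ?a * norm (column i B))\<^sup>2 * Re (det (gram B))
      \<le> (norm ?a * norm (column i B))\<^sup>2 * ((norm ?c)\<^sup>2 * Q)"
    using det_gram_le_residual[OF res] by (simp add: Q_def mult_left_mono)
  also have "\<dots> = (norm (column i B))\<^sup>2 * Q * (norm ?a * norm ?c)\<^sup>2"
    by (simp add: power_mult_distrib)
  also have "\<dots> = (\<Prod>j\<in>UNIV. (norm (column j B))\<^sup>2)"
    by (simp add: \<open>norm ?a * norm ?c = 1\<close> Q_def prod.remove[of UNIV i])
  finally show ?thesis
    using det_gram_pos[OF indep] by (simp add: real_le_rsqrt pos_le_divide_eq)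
qed

lemma Max_le_divide_Min:
  fixes f g :: "'a::finite \<Rightarrow> real"
  assumes "\<And>i. 0 \<le> f i" and "\<And>i. 0 < g i" and "\<And>i. f i * g i \<le> d"
  shows "Max (range f) \<le> d / Min (range g)"
proof -
  have "Max (range f) \<in> range f" "Min (range g) \<in> range g"
    by (auto intro: Max_in Min_in)
  then obtain i j where i: "Max (range f) = f i" and j: "Min (range g) = g j"
    by blast
  have "f i * g j \<le> f i * g i"
    using Min_le[of "range g" "g i"] j assms(1) by (simp add: mult_left_mono)
  also have "\<dots> \<le> d"
    by (rule assms(3))
  finally show ?thesis
    using i j assms(2)[of j] by (simp add: pos_le_divide_eq)
qed

theorem lemma1:
  fixes B :: "complex ^'m ^'n"
  assumes MN: "CARD('m) \<le> CARD('n)"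
    and indep: "\<forall>c :: complex ^'m. B *v c = 0 \<longrightarrow> c = 0"
  defines "G \<equiv> hermitian_transpose B ** B"
  defines "\<delta> \<equiv> (\<Prod>j\<in>UNIV. (norm (column j B))\<^sup>2) / Re (det G)"
  defines "A \<equiv> B ** matrix_inv G"
  shows "Max (range (\<lambda>j. norm (column j B))) \<le> sqrt \<delta> / Min (range (\<lambda>j. norm (column j A))) \<and>
         Max (range (\<lambda>j. norm (column j A))) \<le> sqrt \<delta> / Min (range (\<lambda>j. norm (column j B)))"
proof -
  have A: "A = B ** matrix_inv (gram B)"
    and \<delta>: "\<delta> = (\<Prod>j\<in>UNIV. (norm (column j B))\<^sup>2) / Re (det (gram B))"
    by (simp_all add: A_def \<delta>_def G_def gram_def)
  have bound: "norm (column j A) * norm (column j B) \<le> sqrt \<delta>" for j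
    unfolding A \<delta> by (rule norm_dual_column_mult_norm_column_le[OF indep])
  have pos_A: "0 < norm (column j A)" for j
    using dual_column_nonzero[OF invertible_gram[OF indep]] by (simp add: A)
  have pos_B: "0 < norm (column j B)" for j
  proof -
    have "axis j (1 :: complex) \<noteq> 0"
      by (simp add: axis_def vec_eq_iff)
    then have "B *v axis j 1 \<noteq> 0"
      using indep by blast
    then show ?thesis
      by (simp add: matrix_vector_mult_axis)
  qed
  have "Max (range (\<lambda>j. norm (column j B))) \<le> sqrt \<delta> / Min (range (\<lambda>j. norm (column j A)))"
    by (rule Max_le_divide_Min) (use pos_A bound in \<open>auto simp: mult.commute\<close>)
  moreover have "Max (range (\<lambda>j. norm (column j A))) \<le> sqrt \<delta> / Min (range (\<lambda>j. norm (column j B)))"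
    by (rule Max_le_divide_Min) (use pos_B bound in auto)
  ultimately show ?thesis ..
qed

end
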